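(* For all positive integers $t$ and $p$ there exists an antipodal $3^t5^p$-splitting of $Q_2^{2^{2t+3p}}$.
   Context: $Q_2^n=\{0,1\}^n$. For $0\le m\le n$, an $m$-face of $Q_2^n$ is given by a tuple $a=(a_1,\dots,a_n)\in\{0,1,*\}^n$ with exactly $m$ entries equal to $*$; it denotes the set $\{x\in Q_2^n : x_i=a_i \text{ whenever } a_i\in\{0,1\}\}$. The direction of a face is the set of positions of its asterisks; two faces are parallel if they have the same direction, and two parallel faces $a,b$ are antipodal if $b_i=1-a_i$ at every non-asterisk position $i$. For positive integers $k<n$, an antipodal $k$-splitting of $Q_2^n$ is a collection of exactly $2^k$ $(n-k)$-faces whose union is $Q_2^n$ and which contains no pair of parallel non-antipodal faces. *)

theory Defs
  imports Main
begin

text \<open>A face of Q_2^n is a list of length n over option bool: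
  Some False = 0, Some True = 1, None = asterisk.  Vertices of Q_2^n are
  bool lists of length n.\<close>

definition cube :: "nat \<Rightarrow> bool list set" where
  "cube n = {x. length x = n}"

definition is_face :: "nat \<Rightarrow> nat \<Rightarrow> bool option list \<Rightarrow> bool" where
  "is_face n m a \<longleftrightarrow> length a = n \<and> card {i. i < n \<and> a ! i = None} = m"

definition face_set :: "bool option list \<Rightarrow> bool list set" where
  "face_set a = {x. length x = length a \<and>
      (\<forall>i < length a. \<forall>v. a ! i = Some v \<longrightarrow> x ! i = v)}"

definition direction :: "bool option list \<Rightarrow> nat set" where
  "direction a = {i. i < length a \<and> a ! i = None}"

definition parallel :: "bool option list \<Rightarrow> bool option list \<Rightarrow> bool" where
  "parallel a b \<longleftrightarrow> length a = length b \<and> direction a = direction b"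

definition antipodal :: "bool option list \<Rightarrow> bool option list \<Rightarrow> bool" where
  "antipodal a b \<longleftrightarrow> parallel a b \<and>
     (\<forall>i < length a. a ! i \<noteq> None \<longrightarrow> b ! i = map_option Not (a ! i))"

definition antipodal_splitting :: "nat \<Rightarrow> nat \<Rightarrow> bool option list set \<Rightarrow> bool" where
  "antipodal_splitting k n F \<longleftrightarrow>
     0 < k \<and> k < n \<and>
     finite F \<and> card F = 2 ^ k \<and>
     (\<forall>a \<in> F. is_face n (n - k) a) \<and>
     (\<Union>a \<in> F. face_set a) = cube n \<and>
     (\<forall>a \<in> F. \<forall>b \<in> F. a \<noteq> b \<and> parallel a b \<longrightarrow> antipodal a b)"

end

theory Submission
  imports Defs
begin

(*
  Counting vertices, the 2^k faces of dimension n - k of an antipodal k-splitting of Q_2^n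
  tile the cube, so every vertex lies in exactly one of them.

  Splittings compose. Let F1 be an antipodal k1-splitting of Q_2^n1 and F2 one of Q_2^n2, and
  cut the coordinates of Q_2^(n1 n2) into n2 blocks of length n1. Take a face a of F2, replace
  each asterisk of a by a block of asterisks and each fixed coordinate a_j by a face of F1 whose
  first fixed coordinate has the value a_j. These faces form an antipodal k1 k2-splitting: a
  vertex x determines the faces of F1 containing its blocks, their first fixed values form a
  vertex of Q_2^n2, and that vertex determines a. Two distinct parallel faces of F1 are antipodal,
  so their first fixed values differ; this forces two distinct parallel composite faces to be
  antipodal block by block.

  Explicit antipodal 3-splittings of Q_2^4 and 5-splittings of Q_2^8 are checked by evaluation;
  powers of them and one product give a 3^t 5^p-splitting of Q_2^(4^t 8^p) = Q_2^(2^(2t+3p)).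
*)

lemma face_set_Nil: "face_set [] = {[]}"
  by (auto simp: face_set_def)

lemma face_set_Cons_None: "face_set (None # a) = Cons True ` face_set a \<union> Cons False ` face_set a"
proof (rule set_eqI)
  fix x
  show "x \<in> face_set (None # a) \<longleftrightarrow> x \<in> Cons True ` face_set a \<union> Cons False ` face_set a"
  proof (cases x)
    case (Cons y ys)
    have "x \<in> face_set (None # a) \<longleftrightarrow> ys \<in> face_set a"
      unfolding Cons face_set_def by (simp add: All_less_Suc2)
    then show ?thesis using Cons by (cases y) auto
  qed (auto simp: face_set_def)
qed

lemma face_set_Cons_Some: "face_set (Some v # a) = Cons v ` face_set a"
proof (rule set_eqI)
  fix x
  show "x \<in> face_set (Some v # a) \<longleftrightarrow> x \<in> Cons v ` face_set a"
  proof (cases x)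
    case (Cons y ys)
    have "x \<in> face_set (Some v # a) \<longleftrightarrow> y = v \<and> ys \<in> face_set a"
      unfolding Cons face_set_def by (auto simp: All_less_Suc2)
    then show ?thesis using Cons by auto
  qed (auto simp: face_set_def)
qed

lemma finite_face_set: "finite (face_set a)"
proof (induction a)
  case (Cons x a)
  then show ?case by (cases x) (simp_all add: face_set_Cons_None face_set_Cons_Some)
qed (simp add: face_set_Nil)

lemma card_face_set: "card (face_set a) = 2 ^ length (filter (\<lambda>x. x = None) a)"
proof (induction a)
  case Nil
  show ?case by (simp add: face_set_Nil)
next
  case (Cons x a)
  show ?case
  proof (cases x)
    case None
    have "Cons True ` face_set a \<inter> Cons False ` face_set a = {}" by auto
    then have "card (face_set (x # a)) = card (Cons True ` face_set a) + card (Cons False ` face_set a)"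
      using None finite_face_set by (simp add: face_set_Cons_None card_Un_disjoint)
    also have "\<dots> = 2 * card (face_set a)" by (simp add: card_image)
    finally show ?thesis using None Cons.IH by simp
  next
    case (Some v)
    then show ?thesis using Cons.IH by (simp add: face_set_Cons_Some card_image)
  qed
qed

lemma is_face_iff: "is_face n m a \<longleftrightarrow> length a = n \<and> length (filter (\<lambda>x. x = None) a) = m"
  by (auto simp: is_face_def length_filter_conv_card)

lemma card_face_set_is_face: "is_face n m a \<Longrightarrow> card (face_set a) = 2 ^ m"
  by (simp add: is_face_iff card_face_set)

lemma cube_eq_face_set: "cube n = face_set (replicate n None)"
  by (auto simp: cube_def face_set_def)

lemma finite_cube: "finite (cube n)"
  and card_cube: "card (cube n) = 2 ^ n"
  by (simp_all add: cube_eq_face_set finite_face_set card_face_set)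

lemma face_set_subset_cube: "is_face n m a \<Longrightarrow> face_set a \<subseteq> cube n"
  by (auto simp: is_face_def face_set_def cube_def)

lemma parallel_iff: "parallel a b \<longleftrightarrow> map (\<lambda>x. x = None) a = map (\<lambda>x. x = None) b"
proof
  assume "parallel a b"
  then have len: "length a = length b" and dir: "direction a = direction b"
    by (simp_all add: parallel_def)
  have "(a ! i = None) = (b ! i = None)" if "i < length a" for i
  proof -
    have "i \<in> direction a \<longleftrightarrow> i \<in> direction b" using dir by simp
    then show ?thesis using that len by (simp add: direction_def)
  qed
  with len show "map (\<lambda>x. x = None) a = map (\<lambda>x. x = None) b"
    by (simp add: list_eq_iff_nth_eq)
next
  assume eq: "map (\<lambda>x. x = None) a = map (\<lambda>x. x = None) b"
  then have len: "length a = length b" by (rule map_eq_imp_length_eq)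
  have "(a ! i = None) = (b ! i = None)" if "i < length a" for i
    using arg_cong[OF eq, of "\<lambda>xs. xs ! i"] that len by simp
  then have "direction a = direction b"
    using len by (auto simp: direction_def)
  with len show "parallel a b" by (simp add: parallel_def)
qed

lemma antipodal_iff: "antipodal a b \<longleftrightarrow> b = map (map_option Not) a"
proof
  assume ab: "antipodal a b"
  then have "parallel a b" by (simp add: antipodal_def)
  then have len: "length b = length a" and none: "\<And>i. i < length a \<Longrightarrow> (a ! i = None) = (b ! i = None)"
    by (auto simp: parallel_iff list_eq_iff_nth_eq)
  have "b ! i = map_option Not (a ! i)" if "i < length a" for i
    using ab none[OF that] that by (cases "a ! i") (auto simp: antipodal_def)
  with len show "b = map (map_option Not) a"
    by (simp add: list_eq_iff_nth_eq)
next
  assume "b = map (map_option Not) a"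
  then show "antipodal a b"
    by (auto simp: antipodal_def parallel_iff comp_def)
qed

lemma face_set_disjointI:
  assumes "i < length a" "a ! i = Some u" "b ! i = Some (\<not> u)"
  shows "face_set a \<inter> face_set b = {}"
proof -
  have "x ! i = u" "x ! i = (\<not> u)" if "x \<in> face_set a" "x \<in> face_set b" for x
    using that assms by (auto simp: face_set_def)
  then show ?thesis by blast
qed

lemma card_UN_less_sum_card:
  assumes "finite I" "\<And>l. l \<in> I \<Longrightarrow> finite (A l)"
    and "i \<in> I" "j \<in> I" "i \<noteq> j" "A i \<inter> A j \<noteq> {}"
  shows "card (\<Union>l\<in>I. A l) < (\<Sum>l\<in>I. card (A l))"
proof -
  let ?U = "\<Union>l\<in>I - {j}. A l"
  have fin: "finite ?U" "finite (A j)" using assms(1,2,4) by auto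
  have "A i \<subseteq> ?U" using assms(3,5) by blast
  then have "card (?U \<inter> A j) > 0" using assms(6) fin by (auto simp: card_gt_0_iff)
  moreover have "(\<Union>l\<in>I. A l) = ?U \<union> A j" using assms(4) by blast
  ultimately have "card (\<Union>l\<in>I. A l) < card ?U + card (A j)"
    using card_Un_Int[OF fin] by simp
  also have "card ?U \<le> (\<Sum>l\<in>I - {j}. card (A l))" by (rule card_UN_le) (use assms(1) in simp)
  also have "(\<Sum>l\<in>I - {j}. card (A l)) + card (A j) = (\<Sum>l\<in>I. card (A l))"
    using sum.remove[OF assms(1,4), of "\<lambda>l. card (A l)"] by simp
  finally show ?thesis by simp
qed

lemma card_UN_face_set:
  assumes "finite F" "\<forall>a\<in>F. is_face n m a"
    and "\<And>a b. a \<in> F \<Longrightarrow> b \<in> F \<Longrightarrow> a \<noteq> b \<Longrightarrow> face_set a \<inter> face_set b = {}"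
  shows "card (\<Union>a\<in>F. face_set a) = card F * 2 ^ m"
proof -
  have "card (\<Union>a\<in>F. face_set a) = (\<Sum>a\<in>F. card (face_set a))"
    using assms(1,3) by (intro card_UN_disjoint) (auto simp: finite_face_set)
  also have "\<dots> = (\<Sum>a\<in>F. 2 ^ m)"
    using assms(2) by (intro sum.cong refl) (blast intro: card_face_set_is_face)
  finally show ?thesis by simp
qed

lemma UN_face_set_eq_cube_iff:
  assumes "finite F" "\<forall>a\<in>F. is_face n (n - k) a" "k \<le> n"
    and "\<And>a b. a \<in> F \<Longrightarrow> b \<in> F \<Longrightarrow> a \<noteq> b \<Longrightarrow> face_set a \<inter> face_set b = {}"
  shows "(\<Union>a\<in>F. face_set a) = cube n \<longleftrightarrow> card F = 2 ^ k"
proof -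
  have card: "card (\<Union>a\<in>F. face_set a) = card F * 2 ^ (n - k)"
    using assms(1,2,4) by (rule card_UN_face_set)
  have sub: "(\<Union>a\<in>F. face_set a) \<subseteq> cube n"
    using assms(2) face_set_subset_cube by blast
  have cube: "card (cube n) = 2 ^ k * 2 ^ (n - k)"
    using assms(3) by (simp add: card_cube flip: power_add)
  show ?thesis
  proof
    assume "(\<Union>a\<in>F. face_set a) = cube n"
    then show "card F = 2 ^ k" using card cube by simp
  next
    assume "card F = 2 ^ k"
    then show "(\<Union>a\<in>F. face_set a) = cube n"
      using card cube sub finite_cube by (intro card_subset_eq) simp_all
  qed
qed

lemma antipodal_splitting_disjoint:
  assumes "antipodal_splitting k n F" "a \<in> F" "b \<in> F" "a \<noteq> b"
  shows "face_set a \<inter> face_set b = {}"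
proof (rule ccontr)
  assume meet: "face_set a \<inter> face_set b \<noteq> {}"
  have fin: "finite F" and card: "card F = 2 ^ k" and k: "k < n"
    and faces: "\<forall>a\<in>F. is_face n (n - k) a" and cover: "(\<Union>a\<in>F. face_set a) = cube n"
    using assms(1) by (simp_all add: antipodal_splitting_def)
  have "card (\<Union>a\<in>F. face_set a) < (\<Sum>a\<in>F. card (face_set a))"
    using fin assms(2-4) meet by (intro card_UN_less_sum_card) (auto simp: finite_face_set)
  also have "\<dots> = (\<Sum>a\<in>F. 2 ^ (n - k))"
    using faces by (intro sum.cong refl) (blast intro: card_face_set_is_face)
  also have "\<dots> = card (cube n)"
    using card k by (simp add: card_cube flip: power_add)
  finally show False using cover by simp
qed

(* Unspecified for a face without fixed coordinates. *)
definition first_fixed_value :: "bool option list \<Rightarrow> bool" where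
  "first_fixed_value a = the (hd (filter (\<lambda>x. x \<noteq> None) a))"

lemma first_fixed_value_negate:
  assumes "\<exists>i < length a. a ! i \<noteq> None"
  shows "first_fixed_value (map (map_option Not) a) = (\<not> first_fixed_value a)"
proof -
  let ?fixed = "filter (\<lambda>x. x \<noteq> None) a"
  have "?fixed \<noteq> []" using assms nth_mem by (fastforce simp: filter_empty_conv)
  then have "hd ?fixed \<noteq> None" and "filter (\<lambda>x. x \<noteq> None) (map (map_option Not) a) = map (map_option Not) ?fixed"
    using hd_in_set[of ?fixed] by (auto simp: filter_map comp_def)
  with \<open>?fixed \<noteq> []\<close> show ?thesis
    by (auto simp: first_fixed_value_def hd_map)
qed

lemma antipodal_splitting_is_face: "antipodal_splitting k n F \<Longrightarrow> a \<in> F \<Longrightarrow> is_face n (n - k) a"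
  by (simp add: antipodal_splitting_def)

lemma antipodal_splitting_length: "antipodal_splitting k n F \<Longrightarrow> a \<in> F \<Longrightarrow> length a = n"
  by (simp add: antipodal_splitting_def is_face_def)

lemma antipodal_splitting_has_fixed:
  assumes "antipodal_splitting k n F" "a \<in> F"
  shows "\<exists>i < n. a ! i \<noteq> None"
proof (rule ccontr)
  assume "\<not> (\<exists>i < n. a ! i \<noteq> None)"
  then have "{i. i < n \<and> a ! i = None} = {..<n}" by auto
  moreover have "is_face n (n - k) a" using assms by (rule antipodal_splitting_is_face)
  ultimately have "n = n - k" by (simp add: is_face_def)
  moreover have "0 < k" "k < n" using assms(1) by (simp_all add: antipodal_splitting_def)
  ultimately show False by simp
qed

lemma antipodal_splitting_first_fixed_value:
  assumes "antipodal_splitting k n F" "a \<in> F" "b \<in> F" "a \<noteq> b" "parallel a b"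
  shows "first_fixed_value b = (\<not> first_fixed_value a)"
proof -
  have "b = map (map_option Not) a"
    using assms by (simp add: antipodal_splitting_def antipodal_iff)
  then show ?thesis
    using antipodal_splitting_has_fixed[OF assms(1,2)] antipodal_splitting_length[OF assms(1,2)]
    by (simp add: first_fixed_value_negate)
qed

definition face_containing :: "bool option list set \<Rightarrow> bool list \<Rightarrow> bool option list" where
  "face_containing F x = (THE a. a \<in> F \<and> x \<in> face_set a)"

lemma face_containing_eq:
  assumes "antipodal_splitting k n F" "a \<in> F" "x \<in> face_set a"
  shows "face_containing F x = a"
  unfolding face_containing_def
proof (rule the_equality)
  fix b assume "b \<in> F \<and> x \<in> face_set b"
  then show "b = a" using antipodal_splitting_disjoint[OF assms(1), of b a] assms(2,3) by blast
qed (use assms(2,3) in blast)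

lemma face_containing_mem:
  assumes "antipodal_splitting k n F" "x \<in> cube n"
  shows "face_containing F x \<in> F" "x \<in> face_set (face_containing F x)"
proof -
  have "x \<in> (\<Union>a\<in>F. face_set a)" using assms by (simp add: antipodal_splitting_def)
  then obtain a where "a \<in> F" "x \<in> face_set a" by blast
  then show "face_containing F x \<in> F" "x \<in> face_set (face_containing F x)"
    using face_containing_eq[OF assms(1)] by simp_all
qed

(* Covering is not checked: by counting it follows from pairwise disjointness. *)
definition splitting_certificate :: "nat \<Rightarrow> nat \<Rightarrow> bool option list list \<Rightarrow> bool" where
  "splitting_certificate k n Fs \<longleftrightarrow>
     0 < k \<and> k < n \<and> distinct Fs \<and> length Fs = 2 ^ k \<and>
     (\<forall>a \<in> set Fs. length a = n \<and> length (filter (\<lambda>x. x = None) a) = n - k) \<and>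
     (\<forall>a \<in> set Fs. \<forall>b \<in> set Fs. a \<noteq> b \<longrightarrow>
        (\<exists>(x, y) \<in> set (zip a b). x \<noteq> None \<and> y = map_option Not x) \<and>
        (map (\<lambda>x. x = None) a = map (\<lambda>x. x = None) b \<longrightarrow> b = map (map_option Not) a))"

lemma antipodal_splitting_if_certificate:
  assumes "splitting_certificate k n Fs"
  shows "antipodal_splitting k n (set Fs)"
proof -
  have k: "0 < k" "k < n" and card: "card (set Fs) = 2 ^ k"
    and faces: "\<forall>a \<in> set Fs. is_face n (n - k) a"
    and pairs: "\<And>a b. a \<in> set Fs \<Longrightarrow> b \<in> set Fs \<Longrightarrow> a \<noteq> b \<Longrightarrow>
        (\<exists>(x, y) \<in> set (zip a b). x \<noteq> None \<and> y = map_option Not x) \<and>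
        (map (\<lambda>x. x = None) a = map (\<lambda>x. x = None) b \<longrightarrow> b = map (map_option Not) a)"
    using assms by (simp_all add: splitting_certificate_def distinct_card is_face_iff)
  have disjoint: "face_set a \<inter> face_set b = {}"
    if ab: "a \<in> set Fs" "b \<in> set Fs" "a \<noteq> b" for a b
  proof -
    obtain x y where "(x, y) \<in> set (zip a b)" "x \<noteq> None" "y = map_option Not x"
      using pairs[OF ab] by blast
    then obtain i u where "i < length a" "a ! i = Some u" "b ! i = Some (\<not> u)"
      by (auto simp: in_set_zip)
    then show ?thesis by (rule face_set_disjointI)
  qed
  have "antipodal a b" if "a \<in> set Fs" "b \<in> set Fs" "a \<noteq> b" "parallel a b" for a b
    using pairs[OF that(1-3)] that(4) by (simp add: parallel_iff antipodal_iff)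
  moreover have "(\<Union>a \<in> set Fs. face_set a) = cube n"
    using faces k card disjoint by (subst UN_face_set_eq_cube_iff) auto
  ultimately show ?thesis
    using k card faces by (simp add: antipodal_splitting_def)
qed

definition face_of_string :: "string \<Rightarrow> bool option list" where
  "face_of_string = map (\<lambda>c. if c = CHR ''*'' then None else Some (c = CHR ''1''))"

definition splitting_3_4 :: "bool option list list" where
  "splitting_3_4 = map face_of_string
     [''00*0'', ''1*00'', ''010*'', ''101*'', ''*110'', ''*001'', ''11*1'', ''0*11'']"

definition splitting_5_8 :: "bool option list list" where
  "splitting_5_8 = map face_of_string
     [''*00**000'', ''*11**111'', ''*00*11*0'', ''*11*00*1'', ''*100**00'', ''*011**11'',
      ''*1100**0'', ''*0011**1'', ''0*0**010'', ''1*1**101'', ''1*1*11*0'', ''0*0*00*1'',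
      ''0*11**10'', ''1*00**01'', ''0*101**0'', ''1*010**1'', ''10***010'', ''01***101'',
      ''10**01*0'', ''01**10*1'', ''01*1**00'', ''10*0**11'', ''11*10**0'', ''00*01**1'',
      ''101**00*'', ''010**11*'', ''111*10**'', ''000*01**'', ''0011**0*'', ''1100**1*'',
      ''00100***'', ''11011***'']"

lemma antipodal_splitting_3_4: "antipodal_splitting 3 4 (set splitting_3_4)"
  by (rule antipodal_splitting_if_certificate) code_simp

lemma antipodal_splitting_5_8: "antipodal_splitting 5 8 (set splitting_5_8)"
  by (rule antipodal_splitting_if_certificate) code_simp

lemma mult_index_cases:
  fixes i l m :: nat
  assumes "i < l * m"
  obtains j r where "j < l" "r < m" "i = j * m + r"
proof
  show "i div m < l" using assms by (simp add: less_mult_imp_div_less)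
  show "i mod m < m" using assms by (cases "m = 0") simp_all
qed simp

lemma index_less_mult:
  fixes j l r m :: nat
  assumes "j < l" "r < m"
  shows "j * m + r < l * m"
proof -
  have "Suc j * m \<le> l * m" using assms(1) by (intro mult_le_mono1) simp
  then show ?thesis using assms(2) by simp
qed

lemma all_less_mult_iff:
  fixes l m :: nat
  shows "(\<forall>i < l * m. P i) \<longleftrightarrow> (\<forall>j < l. \<forall>r < m. P (j * m + r))"
  by (metis index_less_mult mult_index_cases)

lemma card_less_mult_blocks:
  fixes l m :: nat
  shows "card {i. i < l * m \<and> P i} = (\<Sum>j<l. card {r. r < m \<and> P (j * m + r)})"
proof (induction l)
  case (Suc l)
  have "{i. i < Suc l * m \<and> P i} = {i. i < l * m \<and> P i} \<union> (\<lambda>r. l * m + r) ` {r. r < m \<and> P (l * m + r)}"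
    (is "?L = ?A \<union> ?B")
  proof
    show "?L \<subseteq> ?A \<union> ?B"
    proof
      fix i assume "i \<in> ?L"
      then show "i \<in> ?A \<union> ?B"
        by (cases "i < l * m") (auto simp: image_iff intro!: exI[of _ "i - l * m"])
    qed
  qed auto
  moreover have "card (?A \<union> ?B) = card ?A + card ?B"
    by (rule card_Un_disjoint) auto
  ultimately have "card ?L = card ?A + card ?B" by simp
  also have "card ?B = card {r. r < m \<and> P (l * m + r)}"
    by (simp add: card_image)
  finally show ?case using Suc.IH by simp
qed simp

definition block :: "nat \<Rightarrow> 'a list \<Rightarrow> nat \<Rightarrow> 'a list" where
  "block m x j = map (\<lambda>r. x ! (j * m + r)) [0..<m]"

lemma block_in_cube [simp]: "block m x j \<in> cube m"
  by (simp add: block_def cube_def)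

definition substitute :: "nat \<Rightarrow> bool option list \<Rightarrow> (nat \<Rightarrow> bool option list) \<Rightarrow> bool option list" where
  "substitute m a c =
     map (\<lambda>i. if a ! (i div m) = None then None else c (i div m) ! (i mod m)) [0..<length a * m]"

lemma length_substitute [simp]: "length (substitute m a c) = length a * m"
  by (simp add: substitute_def)

lemma nth_substitute:
  assumes "j < length a" "r < m"
  shows "substitute m a c ! (j * m + r) = (if a ! j = None then None else c j ! r)"
  using index_less_mult[OF assms] assms by (simp add: substitute_def)

lemma substitute_cong:
  assumes "\<And>j. j < length a \<Longrightarrow> a ! j \<noteq> None \<Longrightarrow> c j = d j"
  shows "substitute m a c = substitute m a d"
proof (rule nth_equalityI)
  fix i assume "i < length (substitute m a c)"
  then obtain j r where "j < length a" "r < m" "i = j * m + r"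
    by (auto elim: mult_index_cases)
  then show "substitute m a c ! i = substitute m a d ! i"
    using assms by (simp add: nth_substitute)
qed simp

lemma mem_face_set_substitute:
  assumes "\<And>j. j < length a \<Longrightarrow> a ! j \<noteq> None \<Longrightarrow> length (c j) = m"
  shows "x \<in> face_set (substitute m a c) \<longleftrightarrow>
    length x = length a * m \<and> (\<forall>j < length a. a ! j \<noteq> None \<longrightarrow> block m x j \<in> face_set (c j))"
proof -
  have "(\<forall>i < length a * m. \<forall>v. substitute m a c ! i = Some v \<longrightarrow> x ! i = v) \<longleftrightarrow>
      (\<forall>j < length a. \<forall>r < m. \<forall>v. substitute m a c ! (j * m + r) = Some v \<longrightarrow> x ! (j * m + r) = v)"
    by (rule all_less_mult_iff)
  also have "\<dots> \<longleftrightarrow> (\<forall>j < length a. a ! j \<noteq> None \<longrightarrow> block m x j \<in> face_set (c j))"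
    using assms by (auto simp: nth_substitute face_set_def block_def)
  finally show ?thesis by (auto simp: face_set_def)
qed

lemma map_negate_substitute:
  assumes "\<And>j. j < length a \<Longrightarrow> a ! j \<noteq> None \<Longrightarrow> length (c j) = m"
  shows "map (map_option Not) (substitute m a c) =
    substitute m (map (map_option Not) a) (\<lambda>j. map (map_option Not) (c j))"
proof (rule nth_equalityI)
  fix i assume "i < length (map (map_option Not) (substitute m a c))"
  then obtain j r where "j < length a" "r < m" "i = j * m + r"
    by (auto elim: mult_index_cases)
  then show "map (map_option Not) (substitute m a c) ! i =
      substitute m (map (map_option Not) a) (\<lambda>j. map (map_option Not) (c j)) ! i"
    using assms index_less_mult by (simp add: nth_substitute)
qed simp

lemma is_face_substitute:
  assumes a: "is_face l (l - k) a" and c: "\<And>j. j < l \<Longrightarrow> a ! j \<noteq> None \<Longrightarrow> is_face m (m - k') (c j)"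
    and "k \<le> l" "k' \<le> m"
  shows "is_face (l * m) (l * m - k * k') (substitute m a c)"
proof -
  let ?A = "substitute m a c"
  have len: "length a = l" using a by (simp add: is_face_def)
  have block_count: "card {r. r < m \<and> ?A ! (j * m + r) = None} = (if a ! j = None then m else m - k')"
    if "j < l" for j
  proof (cases "a ! j = None")
    case True
    then have "{r. r < m \<and> ?A ! (j * m + r) = None} = {..<m}"
      using that len by (auto simp: nth_substitute)
    then show ?thesis using True by simp
  next
    case False
    then have "{r. r < m \<and> ?A ! (j * m + r) = None} = {r. r < m \<and> c j ! r = None}"
      using that len by (auto simp: nth_substitute)
    also have "card \<dots> = m - k'"
      using c[OF that False] by (simp add: is_face_def)
    finally show ?thesis unfolding if_not_P[OF False] .
  qed
  have fixed: "card ({..<l} \<inter> - {j. a ! j = None}) = k"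
  proof -
    have "card ({..<l} \<inter> {j. a ! j = None}) = l - k"
      using a by (simp add: is_face_def Int_def lessThan_def conj_commute)
    then show ?thesis
      using card_Int_Diff[of "{..<l}" "{j. a ! j = None}"] \<open>k \<le> l\<close> by (simp add: Diff_eq)
  qed
  have "card {i. i < l * m \<and> ?A ! i = None} = (\<Sum>j<l. card {r. r < m \<and> ?A ! (j * m + r) = None})"
    by (rule card_less_mult_blocks)
  also have "\<dots> = (\<Sum>j<l. if a ! j = None then m else m - k')"
    using block_count by (intro sum.cong) simp_all
  also have "\<dots> = (l - k) * m + k * (m - k')"
    using fixed a by (simp add: sum.If_cases is_face_def Int_def lessThan_def conj_commute)
  also have "\<dots> = l * m - k * k'"
  proof -
    have "k * k' \<le> k * m" "k * m \<le> l * m" using assms(3,4) by simp_all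
    then show ?thesis by (simp add: diff_mult_distrib diff_mult_distrib2)
  qed
  finally show ?thesis using len by (simp add: is_face_def)
qed


definition compatible :: "bool option list set \<Rightarrow> bool option list \<Rightarrow> (nat \<Rightarrow> bool option list) \<Rightarrow> bool" where
  "compatible F a c \<longleftrightarrow>
     (\<forall>j < length a. a ! j \<noteq> None \<longrightarrow> c j \<in> F \<and> a ! j = Some (first_fixed_value (c j)))"

definition compose_splittings ::
    "nat \<Rightarrow> bool option list set \<Rightarrow> bool option list set \<Rightarrow> bool option list set" where
  "compose_splittings m F G = {substitute m a c | a c. a \<in> G \<and> compatible F a c}"

definition leading_values :: "bool option list set \<Rightarrow> nat \<Rightarrow> nat \<Rightarrow> bool list \<Rightarrow> bool list" where
  "leading_values F m l x = map (\<lambda>j. first_fixed_value (face_containing F (block m x j))) [0..<l]"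

locale two_splittings =
  fixes k1 n1 F1 k2 n2 F2
  assumes inner: "antipodal_splitting k1 n1 F1"
    and outer: "antipodal_splitting k2 n2 F2"
begin

lemma compatibleD:
  assumes "a \<in> F2" "compatible F1 a c" "j < n2" "a ! j \<noteq> None"
  shows "c j \<in> F1" "a ! j = Some (first_fixed_value (c j))" "length (c j) = n1"
  using assms antipodal_splitting_length[OF outer] antipodal_splitting_length[OF inner]
  by (auto simp: compatible_def)

lemma mem_face_set_composed:
  assumes "a \<in> F2" "compatible F1 a c"
  shows "x \<in> face_set (substitute n1 a c) \<longleftrightarrow>
    length x = n2 * n1 \<and> (\<forall>j < n2. a ! j \<noteq> None \<longrightarrow> block n1 x j \<in> face_set (c j))"
  using assms compatibleD(3)[OF assms] antipodal_splitting_length[OF outer]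
  by (subst mem_face_set_substitute) auto

lemma composed_face_decode:
  assumes "a \<in> F2" "compatible F1 a c" "x \<in> face_set (substitute n1 a c)"
  shows "\<And>j. j < n2 \<Longrightarrow> a ! j \<noteq> None \<Longrightarrow> c j = face_containing F1 (block n1 x j)"
    and "leading_values F1 n1 n2 x \<in> face_set a"
proof -
  show c: "c j = face_containing F1 (block n1 x j)" if "j < n2" "a ! j \<noteq> None" for j
    using assms that compatibleD[OF assms(1,2) that] face_containing_eq[OF inner]
    by (simp add: mem_face_set_composed)
  have "leading_values F1 n1 n2 x ! j = v" if "j < n2" "a ! j = Some v" for j v
    using that c[OF that(1)] compatibleD(2)[OF assms(1,2) that(1)] by (simp add: leading_values_def)
  then show "leading_values F1 n1 n2 x \<in> face_set a"
    using antipodal_splitting_length[OF outer assms(1)] by (simp add: face_set_def leading_values_def)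
qed

lemma composed_is_face:
  assumes "a \<in> F2" "compatible F1 a c"
  shows "is_face (n2 * n1) (n2 * n1 - k2 * k1) (substitute n1 a c)"
proof (rule is_face_substitute)
  show "is_face n2 (n2 - k2) a" using outer assms(1) by (rule antipodal_splitting_is_face)
  show "is_face n1 (n1 - k1) (c j)" if "j < n2" "a ! j \<noteq> None" for j
    using inner compatibleD(1)[OF assms that] by (rule antipodal_splitting_is_face)
  show "k2 \<le> n2" "k1 \<le> n1"
    using inner outer by (simp_all add: antipodal_splitting_def)
qed

lemma composed_cover:
  assumes "x \<in> cube (n2 * n1)"
  obtains a c where "a \<in> F2" "compatible F1 a c" "x \<in> face_set (substitute n1 a c)"
proof
  define c where "c j = face_containing F1 (block n1 x j)" for j
  define a where "a = face_containing F2 (leading_values F1 n1 n2 x)"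
  have "leading_values F1 n1 n2 x \<in> cube n2"
    by (simp add: leading_values_def cube_def)
  then have a: "a \<in> F2" "leading_values F1 n1 n2 x \<in> face_set a"
    unfolding a_def using face_containing_mem[OF outer] by blast+
  have "a ! j = Some (first_fixed_value (c j))" if "j < n2" "a ! j = Some v" for j v
    using a(2) that antipodal_splitting_length[OF outer a(1)]
    by (simp add: face_set_def leading_values_def c_def)
  then show "compatible F1 a c"
    using face_containing_mem(1)[OF inner] antipodal_splitting_length[OF outer a(1)]
    by (auto simp: compatible_def c_def)
  show "a \<in> F2" by (fact a(1))
  show "x \<in> face_set (substitute n1 a c)"
    using assms face_containing_mem(2)[OF inner block_in_cube]
    by (simp add: mem_face_set_composed[OF a(1) \<open>compatible F1 a c\<close>] cube_def c_def)
qed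

lemma composed_disjoint:
  assumes "a \<in> F2" "compatible F1 a c" "b \<in> F2" "compatible F1 b d"
    and "x \<in> face_set (substitute n1 a c)" "x \<in> face_set (substitute n1 b d)"
  shows "substitute n1 a c = substitute n1 b d"
proof -
  have "a = b"
    using composed_face_decode(2)[OF assms(1,2,5)] composed_face_decode(2)[OF assms(3,4,6)]
      face_containing_eq[OF outer] assms(1,3) by metis
  moreover have "substitute n1 a c = substitute n1 a d"
  proof (rule substitute_cong)
    show "c j = d j" if "j < length a" "a ! j \<noteq> None" for j
      using that composed_face_decode(1)[OF assms(1,2,5)] composed_face_decode(1)[OF assms(3,4,6)]
        antipodal_splitting_length[OF outer assms(1)] \<open>a = b\<close> by simp
  qed
  ultimately show ?thesis by simp
qed

lemma composed_fixed_block_iff: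
  assumes "a \<in> F2" "compatible F1 a c" "j < n2"
  shows "a ! j = None \<longleftrightarrow> (\<forall>r < n1. substitute n1 a c ! (j * n1 + r) = None)"
proof (intro iffI allI impI)
  fix r assume "a ! j = None" "r < n1"
  then show "substitute n1 a c ! (j * n1 + r) = None"
    using assms antipodal_splitting_length[OF outer] by (simp add: nth_substitute)
next
  assume all_None: "\<forall>r < n1. substitute n1 a c ! (j * n1 + r) = None"
  show "a ! j = None"
  proof (rule ccontr)
    assume fixed: "a ! j \<noteq> None"
    then obtain r where "r < n1" "c j ! r \<noteq> None"
      using antipodal_splitting_has_fixed[OF inner compatibleD(1)[OF assms]] by blast
    then show False
      using all_None fixed assms antipodal_splitting_length[OF outer] by (auto simp: nth_substitute)
  qed
qed

lemma composed_parallel: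
  assumes a: "a \<in> F2" "compatible F1 a c" and b: "b \<in> F2" "compatible F1 b d"
    and par: "parallel (substitute n1 a c) (substitute n1 b d)"
  shows "\<And>j. j < n2 \<Longrightarrow> (a ! j = None) = (b ! j = None)"
    and "\<And>j. j < n2 \<Longrightarrow> a ! j \<noteq> None \<Longrightarrow> parallel (c j) (d j)"
proof -
  let ?A = "substitute n1 a c" and ?B = "substitute n1 b d"
  have la: "length a = n2" and lb: "length b = n2"
    using a(1) b(1) antipodal_splitting_length[OF outer] by simp_all
  have same_None: "(?A ! i = None) = (?B ! i = None)" if "i < n2 * n1" for i
    using par that la lb by (simp add: parallel_iff list_eq_iff_nth_eq)
  show same_fixed: "(a ! j = None) = (b ! j = None)" if "j < n2" for j
    using composed_fixed_block_iff[OF a that] composed_fixed_block_iff[OF b that]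
      same_None index_less_mult[OF that] by simp
  show "parallel (c j) (d j)" if "j < n2" "a ! j \<noteq> None" for j
  proof -
    have "b ! j \<noteq> None" using same_fixed that by simp
    then have "(c j ! r = None) = (d j ! r = None)" if "r < n1" for r
      using same_None[OF index_less_mult[OF \<open>j < n2\<close> that]] \<open>j < n2\<close> \<open>a ! j \<noteq> None\<close> that la lb
      by (auto simp: nth_substitute)
    moreover have "length (c j) = n1" "length (d j) = n1"
      using compatibleD(3)[OF a that] compatibleD(3)[OF b \<open>j < n2\<close> \<open>b ! j \<noteq> None\<close>] by simp_all
    ultimately show ?thesis by (simp add: parallel_iff list_eq_iff_nth_eq)
  qed
qed

lemma composed_antipodal:
  assumes a: "a \<in> F2" "compatible F1 a c" and b: "b \<in> F2" "compatible F1 b d"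
    and ne: "substitute n1 a c \<noteq> substitute n1 b d"
    and par: "parallel (substitute n1 a c) (substitute n1 b d)"
  shows "antipodal (substitute n1 a c) (substitute n1 b d)"
proof -
  let ?A = "substitute n1 a c" and ?B = "substitute n1 b d"
  note same_fixed = composed_parallel(1)[OF a b par]
    and par_blocks = composed_parallel(2)[OF a b par]
  have la: "length a = n2" and lb: "length b = n2"
    using a(1) b(1) antipodal_splitting_length[OF outer] by simp_all
  show ?thesis
  proof (cases "a = b")
    case True
    have "c j = d j" if "j < length a" "a ! j \<noteq> None" for j
    proof (rule ccontr)
      assume "c j \<noteq> d j"
      then have "first_fixed_value (d j) = (\<not> first_fixed_value (c j))"
        using antipodal_splitting_first_fixed_value[OF inner] compatibleD(1)[OF a] compatibleD(1)[OF b]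
          par_blocks True that la by simp
      moreover have "first_fixed_value (d j) = first_fixed_value (c j)"
        using compatibleD(2)[OF a] compatibleD(2)[OF b] True that la by (metis option.inject)
      ultimately show False by simp
    qed
    then have "?A = substitute n1 a d" by (rule substitute_cong)
    then have "?A = ?B" using True by simp
    with ne show ?thesis by contradiction
  next
    case False
    have "parallel a b"
      using same_fixed la lb by (simp add: parallel_iff list_eq_iff_nth_eq)
    then have b_eq: "b = map (map_option Not) a"
      using outer a(1) b(1) False by (simp add: antipodal_splitting_def antipodal_iff)
    have d_eq: "d j = map (map_option Not) (c j)" if "j < n2" "a ! j \<noteq> None" for j
    proof -
      have "b ! j \<noteq> None" using same_fixed that by simp
      have "first_fixed_value (d j) = (\<not> first_fixed_value (c j))"
        using compatibleD(2)[OF a that] compatibleD(2)[OF b \<open>j < n2\<close> \<open>b ! j \<noteq> None\<close>] b_eq that la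
        by auto
      then have "c j \<noteq> d j" by auto
      then have "antipodal (c j) (d j)"
        using inner compatibleD(1)[OF a that] compatibleD(1)[OF b \<open>j < n2\<close> \<open>b ! j \<noteq> None\<close>]
          par_blocks[OF that] that by (simp add: antipodal_splitting_def)
      then show ?thesis by (simp add: antipodal_iff)
    qed
    have "map (map_option Not) ?A = substitute n1 (map (map_option Not) a) (\<lambda>j. map (map_option Not) (c j))"
      by (rule map_negate_substitute) (use compatibleD(3)[OF a] la in auto)
    also have "\<dots> = ?B"
      unfolding b_eq by (rule substitute_cong) (use d_eq la in auto)
    finally show ?thesis by (simp add: antipodal_iff)
  qed
qed

theorem antipodal_splitting_compose:
  "antipodal_splitting (k1 * k2) (n1 * n2) (compose_splittings n1 F1 F2)"
proof -
  let ?H = "compose_splittings n1 F1 F2"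
  have mem: "A \<in> ?H \<longleftrightarrow> (\<exists>a c. A = substitute n1 a c \<and> a \<in> F2 \<and> compatible F1 a c)" for A
    by (auto simp: compose_splittings_def)
  have k: "0 < k1 * k2" "k1 * k2 < n1 * n2"
    using inner outer by (simp_all add: antipodal_splitting_def mult_strict_mono)
  have faces: "\<forall>A\<in>?H. is_face (n1 * n2) (n1 * n2 - k1 * k2) A"
    using composed_is_face by (auto simp: mem mult.commute)
  have "?H \<subseteq> {A. set A \<subseteq> UNIV \<and> length A = n1 * n2}"
    using faces by (auto simp: is_face_def)
  then have finite: "finite ?H"
    by (rule finite_subset) (rule finite_lists_length_eq, simp)
  have disjoint: "face_set A \<inter> face_set B = {}" if "A \<in> ?H" "B \<in> ?H" "A \<noteq> B" for A B
    using that composed_disjoint by (auto simp: mem)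
  have "(\<Union>A\<in>?H. face_set A) = cube (n1 * n2)"
  proof
    show "(\<Union>A\<in>?H. face_set A) \<subseteq> cube (n1 * n2)"
      using faces face_set_subset_cube by blast
    show "cube (n1 * n2) \<subseteq> (\<Union>A\<in>?H. face_set A)"
    proof
      fix x assume "x \<in> cube (n1 * n2)"
      then obtain a c where "a \<in> F2" "compatible F1 a c" "x \<in> face_set (substitute n1 a c)"
        using composed_cover by (auto simp: mult.commute)
      then have "substitute n1 a c \<in> ?H" "x \<in> face_set (substitute n1 a c)"
        by (auto simp: mem)
      then show "x \<in> (\<Union>A\<in>?H. face_set A)" by blast
    qed
  qed
  moreover have "antipodal A B" if "A \<in> ?H" "B \<in> ?H" "A \<noteq> B" "parallel A B" for A B
    using that composed_antipodal by (auto simp: mem)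
  ultimately show ?thesis
    using UN_face_set_eq_cube_iff[OF finite faces _ disjoint] k faces finite
    by (simp add: antipodal_splitting_def)
qed

end

lemma antipodal_splitting_power:
  assumes "antipodal_splitting k n F" "0 < e"
  shows "\<exists>G. antipodal_splitting (k ^ e) (n ^ e) G"
  using assms(2)
proof (induction e rule: nat_induct_non_zero)
  case 1
  show ?case using assms(1) by auto
next
  case (Suc e)
  then obtain G where "antipodal_splitting (k ^ e) (n ^ e) G" by blast
  then have "antipodal_splitting (k ^ e * k) (n ^ e * n) (compose_splittings (n ^ e) G F)"
    using assms(1) by (intro two_splittings.antipodal_splitting_compose two_splittings.intro)
  then show ?case by (auto simp flip: power_Suc2)
qed

theorem corollary1:
  fixes t p :: nat
  assumes "0 < t" and "0 < p"
  shows "\<exists>F. antipodal_splitting (3 ^ t * 5 ^ p) (2 ^ (2 * t + 3 * p)) F"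
proof -
  obtain G1 where "antipodal_splitting (3 ^ t) (4 ^ t) G1"
    using antipodal_splitting_power[OF antipodal_splitting_3_4 assms(1)] by auto
  moreover obtain G2 where "antipodal_splitting (5 ^ p) (8 ^ p) G2"
    using antipodal_splitting_power[OF antipodal_splitting_5_8 assms(2)] by auto
  ultimately have "antipodal_splitting (3 ^ t * 5 ^ p) (4 ^ t * 8 ^ p) (compose_splittings (4 ^ t) G1 G2)"
    by (intro two_splittings.antipodal_splitting_compose two_splittings.intro)
  moreover have "(4::nat) ^ t * 8 ^ p = 2 ^ (2 * t + 3 * p)"
    by (simp add: power_add power_mult)
  ultimately show ?thesis by auto
qed

end
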